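(* Let $p$ be a prime and let $G$ be a non-abelian finite $p$-group of order $p^n$, with $d=d(G)$, $\delta=d(G/Z(G))$, $k'=d(\gamma_2G/\gamma_3G)$ and $|\gamma_2G|=p^k$. Let $r,t$ be non-negative integers with $\binom{\delta}{2}-k'=\binom{r}{2}+t$ and $0\le t<r$. Then \[\tfrac{1}{2}(d-1)(n+k)-k(d-\delta)-\binom{\delta}{3}+\binom{r}{3}+\binom{t}{2}\;\le\;\tfrac{1}{2}(d-1)(n+k)-\sum_{i=2}^{\min(d,k'+1)}(d-i).\]
   Context: $d(\cdot)$ denotes the minimal number of generators, $Z(G)$ the center, $\gamma_iG$ the lower central series. Binomial coefficients satisfy $\binom{a}{b}=0$ when $0\le a<b$; an empty sum is $0$. (The right-hand side is the exponent in a known bound $|M(G)|\le p^{\frac12(d-1)(n+k)-\sum_{i=2}^{\min(d,k'+1)}(d-i)}$ for the Schur multiplier; the left-hand side is the exponent of the bound $|M(G)|\le p^{\frac{1}{2}(d-1)(n+k)-k(d-\delta)-\binom{\delta}{3}+\binom{r}{3}+\binom{t}{2}}$.) *)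

theory Defs
  imports "HOL-Algebra.Algebra"
begin

definition min_gens :: "('a, 'b) monoid_scheme \<Rightarrow> nat" where
  "min_gens H = (LEAST m. \<exists>S. S \<subseteq> carrier H \<and> finite S \<and> card S = m \<and> generate H S = carrier H)"

definition grp_center :: "('a, 'b) monoid_scheme \<Rightarrow> 'a set" where
  "grp_center G = {z \<in> carrier G. \<forall>g \<in> carrier G. z \<otimes>\<^bsub>G\<^esub> g = g \<otimes>\<^bsub>G\<^esub> z}"

definition comm_subgroup :: "('a, 'b) monoid_scheme \<Rightarrow> 'a set \<Rightarrow> 'a set \<Rightarrow> 'a set" where
  "comm_subgroup G H K = generate G
     {inv\<^bsub>G\<^esub> h \<otimes>\<^bsub>G\<^esub> inv\<^bsub>G\<^esub> k \<otimes>\<^bsub>G\<^esub> h \<otimes>\<^bsub>G\<^esub> k | h k. h \<in> H \<and> k \<in> K}"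

fun lower_central :: "('a, 'b) monoid_scheme \<Rightarrow> nat \<Rightarrow> 'a set" where
  "lower_central G 0 = carrier G"
| "lower_central G (Suc 0) = carrier G"
| "lower_central G (Suc (Suc i)) = comm_subgroup G (lower_central G (Suc i)) (carrier G)"

end

theory Submission
  imports Defs
begin

text \<open>
  Two group-theoretic facts carry the argument: \<delta> \<le> d, because G/Z(G) is a quotient of G, and
  k' \<le> k, because \<gamma>_2G/\<gamma>_3G is a quotient of the group \<gamma>_2G of order p^k, which needs at most k
  generators. Comparing the two sums term by term then costs at most k'(d - \<delta>) \<le> k(d - \<delta>), and
  what remains is the combinatorial inequality
  sum(i = 2..min(\<delta>, k' + 1)) (\<delta> - i) + C(r,3) + C(t,2) \<le> C(\<delta>,3)  whenever  C(\<delta>,2) = k' + C(r,2) + t, t < r,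
  proved by induction on k'.
\<close>

lemma min_gens_le_card:
  assumes "S \<subseteq> carrier H" "finite S" "generate H S = carrier H"
  shows "min_gens H \<le> card S"
  unfolding min_gens_def by (rule Least_le) (use assms in blast)

lemma (in group) obtain_min_generating_set:
  assumes "finite (carrier G)"
  obtains S where "S \<subseteq> carrier G" "finite S" "card S = min_gens G" "generate G S = carrier G"
proof -
  have "generate G (carrier G) = carrier G"
    using generate_subgroup_incl[OF order_refl subgroup_self] generate.incl[of _ "carrier G" G] by blast
  with assms have "\<exists>m S. S \<subseteq> carrier G \<and> finite S \<and> card S = m \<and> generate G S = carrier G"
    by blast
  from LeastI_ex[OF this] show ?thesis
    using that unfolding min_gens_def by blast
qed

lemma min_gens_surj_hom_le:
  assumes "group_hom G H h" "h ` carrier G = carrier H" "finite (carrier G)"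
  shows "min_gens H \<le> min_gens G"
proof -
  interpret group_hom G H h by fact
  obtain S where S: "S \<subseteq> carrier G" "finite S" "card S = min_gens G" "generate G S = carrier G"
    using G.obtain_min_generating_set[OF assms(3)] .
  have "generate H (h ` S) = carrier H"
    using generate_img[OF S(1)] S(4) assms(2) by simp
  then have "min_gens H \<le> card (h ` S)"
    using S(1,2) assms(2) by (intro min_gens_le_card) auto
  also have "\<dots> \<le> min_gens G"
    using S(2,3) card_image_le by metis
  finally show ?thesis .
qed

lemma (in normal) min_gens_FactGroup_le:
  assumes "finite (carrier G)"
  shows "min_gens (G Mod H) \<le> min_gens G"
proof (rule min_gens_surj_hom_le[OF _ _ assms])
  show "group_hom G (G Mod H) ((#>) H)"
    unfolding group_hom_def group_hom_axioms_def
    using r_coset_hom_Mod factorgroup_is_group is_group by blast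
  show "(#>) H ` carrier G = carrier (G Mod H)"
    by (auto simp: FactGroup_def RCOSETS_def)
qed

lemma (in group) card_subgroup_prime_power:
  assumes "Factorial_Ring.prime p" "order G = p ^ k" "subgroup K G"
  shows "\<exists>i. card K = p ^ i"
proof -
  have "card K dvd p ^ k"
    using lagrange[OF assms(3)] assms(2) by (metis dvd_triv_right)
  then show ?thesis
    using divides_primepow_nat[OF assms(1)] by blast
qed

lemma (in group) exists_generate_eq_or_card_ge_prime_power:
  assumes "Factorial_Ring.prime p" "order G = p ^ k"
  shows "\<exists>S. S \<subseteq> carrier G \<and> finite S \<and> card S \<le> m
             \<and> (generate G S = carrier G \<or> p ^ m \<le> card (generate G S))"
proof (induction m)
  case 0
  show ?case by (rule exI[of _ "{}"]) (simp add: generate_empty)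
next
  case (Suc m)
  then obtain S where S: "S \<subseteq> carrier G" "finite S" "card S \<le> m"
    and gen: "generate G S = carrier G \<or> p ^ m \<le> card (generate G S)" by blast
  show ?case
  proof (cases "generate G S = carrier G")
    case True
    with S show ?thesis by (intro exI[of _ S]) auto
  next
    case False
    then obtain x where x: "x \<in> carrier G" "x \<notin> generate G S"
      using generate_incl[OF S(1)] by blast
    let ?S = "insert x S"
    have S': "?S \<subseteq> carrier G" "finite ?S" "card ?S \<le> Suc m"
      using S x(1) by (auto simp: card_insert_if)
    have "finite (carrier G)"
      using assms prime_gt_0_nat order_gt_0_iff_finite by simp
    then have "finite (generate G ?S)"
      using generate_incl[OF S'(1)] finite_subset by blast
    moreover have "generate G S \<subset> generate G ?S"
      using mono_generate[of S ?S] generate.incl[of x ?S] x(2) by blast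
    ultimately have "card (generate G S) < card (generate G ?S)"
      by (rule psubset_card_mono)
    \<comment> \<open>both orders are powers of p, so the larger one is at least p times the smaller\<close>
    moreover obtain a b where "card (generate G S) = p ^ a" and b: "card (generate G ?S) = p ^ b"
      using card_subgroup_prime_power[OF assms generate_is_subgroup[OF S(1)]]
        card_subgroup_prime_power[OF assms generate_is_subgroup[OF S'(1)]] by blast
    ultimately have "m < b"
      using gen False prime_gt_1_nat[OF assms(1)] by (auto simp: power_strict_increasing_iff)
    then have "p ^ Suc m \<le> card (generate G ?S)"
      using b power_increasing[of "Suc m" b p] prime_gt_1_nat[OF assms(1)] by simp
    with S' show ?thesis by blast
  qed
qed

lemma (in group) min_gens_le_if_order_prime_power:
  assumes "Factorial_Ring.prime p" "order G = p ^ k"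
  shows "min_gens G \<le> k"
proof -
  obtain S where S: "S \<subseteq> carrier G" "finite S" "card S \<le> k"
    and gen: "generate G S = carrier G \<or> p ^ k \<le> card (generate G S)"
    using exists_generate_eq_or_card_ge_prime_power[OF assms] by blast
  have "finite (carrier G)"
    using assms prime_gt_0_nat order_gt_0_iff_finite by simp
  then have "generate G S = carrier G"
    using gen card_seteq[OF _ generate_incl[OF S(1)]] assms(2) unfolding order_def by auto
  then show ?thesis
    using min_gens_le_card[OF S(1,2)] S(3) by simp
qed

lemma (in group) grp_center_subgroup: "subgroup (grp_center G) G"
proof
  show "grp_center G \<subseteq> carrier G" "\<one> \<in> grp_center G"
    unfolding grp_center_def by simp_all
next
  fix x y assume x: "x \<in> grp_center G" and y: "y \<in> grp_center G"
  have "x \<otimes> y \<otimes> g = g \<otimes> (x \<otimes> y)" if g: "g \<in> carrier G" for g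
  proof -
    have xc: "x \<in> carrier G" "x \<otimes> g = g \<otimes> x" and yc: "y \<in> carrier G" "y \<otimes> g = g \<otimes> y"
      using x y g unfolding grp_center_def by blast+
    have "x \<otimes> y \<otimes> g = x \<otimes> (g \<otimes> y)"
      using xc yc g by (simp add: m_assoc)
    also have "\<dots> = g \<otimes> (x \<otimes> y)"
      using xc yc g by (simp add: m_assoc[symmetric])
    finally show ?thesis .
  qed
  moreover have "x \<otimes> y \<in> carrier G"
    using x y m_closed unfolding grp_center_def by blast
  ultimately show "x \<otimes> y \<in> grp_center G"
    unfolding grp_center_def by blast
next
  fix x assume x: "x \<in> grp_center G"
  have "inv x \<otimes> g = g \<otimes> inv x" if g: "g \<in> carrier G" for g
  proof -
    have xc: "x \<in> carrier G" "x \<otimes> g = g \<otimes> x"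
      using x g unfolding grp_center_def by blast+
    have "inv x \<otimes> g = inv x \<otimes> (g \<otimes> x) \<otimes> inv x"
      using xc(1) g by (simp add: m_assoc)
    also have "\<dots> = inv x \<otimes> (x \<otimes> g) \<otimes> inv x"
      by (simp only: xc(2))
    also have "\<dots> = g \<otimes> inv x"
      using xc(1) g by (simp add: m_assoc[symmetric])
    finally show ?thesis .
  qed
  moreover have "inv x \<in> carrier G"
    using x inv_closed unfolding grp_center_def by blast
  ultimately show "inv x \<in> grp_center G"
    unfolding grp_center_def by blast
qed

lemma (in group) grp_center_normal: "grp_center G \<lhd> G"
proof (rule normal_invI[OF grp_center_subgroup])
  fix x h assume x: "x \<in> carrier G" and h: "h \<in> grp_center G"
  then have "h \<in> carrier G" "x \<otimes> h = h \<otimes> x"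
    unfolding grp_center_def by auto
  then have "x \<otimes> h \<otimes> inv x = h"
    using x by (simp add: m_assoc)
  with h show "x \<otimes> h \<otimes> inv x \<in> grp_center G"
    by simp
qed

lemma (in group) comm_subgroup_normal:
  assumes "A \<lhd> G"
  shows "comm_subgroup G A (carrier G) \<lhd> G"
  unfolding comm_subgroup_def
proof (rule normal_generateI)
  have A: "A \<subseteq> carrier G"
    using assms normal_imp_subgroup subgroup.subset by blast
  then show "{inv h \<otimes> inv k \<otimes> h \<otimes> k |h k. h \<in> A \<and> k \<in> carrier G} \<subseteq> carrier G"
    by blast
  fix c g assume "c \<in> {inv h \<otimes> inv k \<otimes> h \<otimes> k |h k. h \<in> A \<and> k \<in> carrier G}" and g: "g \<in> carrier G"
  then obtain h k where hk: "h \<in> A" "k \<in> carrier G" and c: "c = inv h \<otimes> inv k \<otimes> h \<otimes> k"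
    by blast
  \<comment> \<open>conjugation by g maps the commutator [h, k] to [g h g\<inverse>, g k g\<inverse>]\<close>
  have "g \<otimes> c \<otimes> inv g
        = inv (g \<otimes> h \<otimes> inv g) \<otimes> inv (g \<otimes> k \<otimes> inv g) \<otimes> (g \<otimes> h \<otimes> inv g) \<otimes> (g \<otimes> k \<otimes> inv g)"
  proof -
    have cancel: "inv g \<otimes> (g \<otimes> x) = x" if "x \<in> carrier G" for x
      using g that by (simp add: m_assoc[symmetric])
    show ?thesis
      using g hk A unfolding c by (simp add: m_assoc inv_mult_group cancel subsetD)
  qed
  moreover have "g \<otimes> h \<otimes> inv g \<in> A"
    using normal_invE(2)[OF assms g hk(1)] .
  ultimately show "g \<otimes> c \<otimes> inv g \<in> {inv h \<otimes> inv k \<otimes> h \<otimes> k |h k. h \<in> A \<and> k \<in> carrier G}"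
    using g hk(2) by blast
qed

lemma (in group) comm_subgroup_subset:
  assumes "A \<lhd> G"
  shows "comm_subgroup G A (carrier G) \<subseteq> A"
  unfolding comm_subgroup_def
proof (rule generate_subgroup_incl)
  interpret normal A G by fact
  show "subgroup A G" by (rule subgroup_axioms)
  show "{inv h \<otimes> inv k \<otimes> h \<otimes> k |h k. h \<in> A \<and> k \<in> carrier G} \<subseteq> A"
  proof clarify
    fix h k assume h: "h \<in> A" and k: "k \<in> carrier G"
    have "inv h \<otimes> (inv k \<otimes> h \<otimes> k) \<in> A"
      using inv_op_closed1[OF k h] h by simp
    then show "inv h \<otimes> inv k \<otimes> h \<otimes> k \<in> A"
      using h k by (simp add: m_assoc)
  qed
qed

lemma (in group) lower_central_normal: "lower_central G i \<lhd> G"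
proof (induction i)
  case (Suc i)
  then show ?case by (cases i) (simp_all add: normal_self comm_subgroup_normal)
qed (simp add: normal_self)

lemma (in group) lower_central_Suc_subset: "lower_central G (Suc i) \<subseteq> lower_central G i"
  by (cases i) (simp_all add: comm_subgroup_subset lower_central_normal)

lemma (in group) min_gens_subgroup_Mod_le:
  assumes "subgroup H G" "N \<lhd> G" "N \<subseteq> H" "Factorial_Ring.prime p" "card H = p ^ k"
  shows "min_gens (subgroup_generated G H Mod N) \<le> k"
proof -
  have H_eq: "subgroup_generated G H = G\<lparr>carrier := H\<rparr>"
    using subgroup.carrier_subgroup_generated_subgroup[OF assms(1)]
    unfolding subgroup_generated_def carrier_subgroup_generated by simp
  interpret H: group "subgroup_generated G H"
    by simp
  interpret normal N "subgroup_generated G H"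
    unfolding H_eq by (rule normal_restrict_supergroup[OF assms(1-3)])
  have "card H > 0"
    using assms(4,5) by (simp add: prime_gt_0_nat)
  then have "finite H"
    by (rule card_ge_0_finite)
  then have "min_gens (subgroup_generated G H Mod N) \<le> min_gens (subgroup_generated G H)"
    using min_gens_FactGroup_le by (simp add: H_eq)
  also have "\<dots> \<le> k"
    using H.min_gens_le_if_order_prime_power[OF assms(4)] assms(5) by (simp add: H_eq order_def)
  finally show ?thesis .
qed

lemma sum_atLeastAtMost_min_Suc:
  fixes f :: "nat \<Rightarrow> 'a::comm_monoid_add"
  shows "(\<Sum>i = 2..min d (Suc m + 1). f i)
         = (\<Sum>i = 2..min d (m + 1). f i) + (if m + 2 \<le> d then f (m + 2) else 0)"
proof (cases "m + 2 \<le> d")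
  case True
  then have "min d (Suc m + 1) = Suc (min d (m + 1))" by simp
  with True show ?thesis by simp
next
  case False
  then have "min d (Suc m + 1) = min d (m + 1)" by simp
  with False show ?thesis by simp
qed

lemma choose_two_Suc: "Suc n choose 2 = (n choose 2) + n"
  by (simp add: numeral_2_eq_2)

lemma choose_three_Suc: "Suc n choose 3 = (n choose 3) + (n choose 2)"
  by (simp add: numeral_3_eq_3 numeral_2_eq_2)

lemma choose_three_le_if_choose_two_le:
  fixes r t \<delta> :: nat
  assumes "(r choose 2) + t \<le> \<delta> choose 2" "t < r"
  shows "(r choose 3) + (t choose 2) \<le> \<delta> choose 3"
proof (cases "r < \<delta>")
  case True
  have "(r choose 3) + (t choose 2) \<le> (r choose 3) + (r choose 2)"
    using binomial_right_mono[of t r 2] assms(2) by simp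
  also have "\<dots> \<le> \<delta> choose 3"
    using binomial_right_mono[of "Suc r" \<delta> 3] True choose_three_Suc[of r] by simp
  finally show ?thesis .
next
  case False
  then have "\<delta> choose 2 \<le> r choose 2"
    by (simp add: binomial_right_mono)
  then have t: "t = 0" and r2: "r choose 2 = \<delta> choose 2"
    using assms(1) by linarith+
  show ?thesis
  proof (cases "r = \<delta>")
    case False
    with \<open>\<not> r < \<delta>\<close> have "Suc \<delta> choose 2 \<le> r choose 2"
      by (simp add: binomial_right_mono)
    then have "r choose 2 = 0"
      using r2 choose_two_Suc[of \<delta>] by simp
    then have "r < 3"
      by (simp add: binomial_eq_0_iff)
    with t show ?thesis by (simp add: binomial_eq_0)
  qed (use t in simp)
qed

lemma diff_le_of_choose_two_eq:
  fixes r t \<delta> m :: nat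
  assumes "\<delta> choose 2 = Suc m + (r choose 2) + t" "t < r" "m + 2 \<le> \<delta>"
  shows "\<delta> - (m + 2) \<le> t"
proof -
  obtain e where e: "\<delta> = Suc e"
    using assms(3) by (cases \<delta>) auto
  have "r \<le> e"
  proof (rule ccontr)
    assume "\<not> r \<le> e"
    then have "\<delta> choose 2 \<le> r choose 2"
      using e by (simp add: binomial_right_mono)
    with assms(1) show False by linarith
  qed
  have "r = e"
  proof (rule ccontr)
    assume "r \<noteq> e"
    with \<open>r \<le> e\<close> have "(r choose 2) + r \<le> e choose 2"
      using binomial_right_mono[of "Suc r" e 2] choose_two_Suc[of r] by simp
    moreover have "(e choose 2) + e = Suc m + (r choose 2) + t"
      using assms(1) e choose_two_Suc[of e] by simp
    ultimately show False
      using assms(2,3) e by linarith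
  qed
  with assms(1) e choose_two_Suc[of e] show ?thesis by simp
qed

lemma sum_diff_plus_choose_three_le:
  fixes \<delta> m r t :: nat
  assumes "\<delta> choose 2 = m + (r choose 2) + t" "t < r"
  shows "(\<Sum>i = 2..min \<delta> (m + 1). \<delta> - i) + (r choose 3) + (t choose 2) \<le> \<delta> choose 3"
  using assms
proof (induction m arbitrary: r t)
  case 0
  then show ?case
    using choose_three_le_if_choose_two_le[of r t \<delta>] by (cases \<delta>) auto
next
  case (Suc m)
  have new_term: "(if m + 2 \<le> \<delta> then \<delta> - (m + 2) else 0) \<le> t"
    using diff_le_of_choose_two_eq[OF Suc.prems] by simp
  \<comment> \<open>one unit is moved from m into t, carrying into r when t + 1 reaches r\<close>
  show ?case
  proof (cases "Suc t < r")
    case True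
    have "\<delta> choose 2 = m + (r choose 2) + Suc t"
      using Suc.prems(1) by simp
    from Suc.IH[OF this True] show ?thesis
      using new_term choose_two_Suc[of t] sum_atLeastAtMost_min_Suc[of "\<lambda>i. \<delta> - i" \<delta> m] by linarith
  next
    case False
    then have r: "r = Suc t"
      using Suc.prems(2) by simp
    have "\<delta> choose 2 = m + (Suc r choose 2) + 0"
      using Suc.prems(1) r choose_two_Suc[of r] by simp
    from Suc.IH[OF this] show ?thesis
      using new_term choose_two_Suc[of t] choose_three_Suc[of r] r
        sum_atLeastAtMost_min_Suc[of "\<lambda>i. \<delta> - i" \<delta> m] by simp
  qed
qed

lemma sum_diff_le_sum_diff_plus:
  fixes d \<delta> m :: nat
  assumes "\<delta> \<le> d"
  shows "(\<Sum>i = 2..min d (m + 1). real d - real i)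
         \<le> real (\<Sum>i = 2..min \<delta> (m + 1). \<delta> - i) + real m * (real d - real \<delta>)"
proof (induction m)
  case 0
  then show ?case by (cases d; cases \<delta>) auto
next
  case (Suc m)
  have "(if m + 2 \<le> d then real d - real (m + 2) else 0)
        \<le> real (if m + 2 \<le> \<delta> then \<delta> - (m + 2) else 0) + (real d - real \<delta>)"
    using assms by auto
  then show ?case
    using Suc.IH sum_atLeastAtMost_min_Suc[of "\<lambda>i. real d - real i" d m]
      sum_atLeastAtMost_min_Suc[of "\<lambda>i. \<delta> - i" \<delta> m]
    by (simp add: algebra_simps)
qed

theorem lemma3p6:
  fixes G :: "('a, 'b) monoid_scheme" and p n k r t :: nat
  assumes "group G" and "Factorial_Ring.prime p"
    and "finite (carrier G)" and "order G = p ^ n"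
    and "\<not> comm_group G"
    and "card (lower_central G 2) = p ^ k"
    and "int (min_gens (G Mod grp_center G) choose 2)
           - int (min_gens (subgroup_generated G (lower_central G 2) Mod lower_central G 3))
         = int (r choose 2) + int t"
    and "t < r"
  shows "(let d = min_gens G;
              \<delta> = min_gens (G Mod grp_center G);
              k' = min_gens (subgroup_generated G (lower_central G 2) Mod lower_central G 3)
          in (1/2) * (real d - 1) * real (n + k) - real k * (real d - real \<delta>)
               - real (\<delta> choose 3) + real (r choose 3) + real (t choose 2)
             \<le> (1/2) * (real d - 1) * real (n + k)
               - (\<Sum>i = 2..min d (k' + 1). (real d - real i)))"
proof -
  interpret group G by fact
  define d where "d = min_gens G"
  define \<delta> where "\<delta> = min_gens (G Mod grp_center G)"
  define k' where "k' = min_gens (subgroup_generated G (lower_central G 2) Mod lower_central G 3)"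
  have "\<delta> \<le> d"
    unfolding \<delta>_def d_def using normal.min_gens_FactGroup_le[OF grp_center_normal assms(3)] .
  have "k' \<le> k"
    unfolding k'_def
    using min_gens_subgroup_Mod_le[OF normal_imp_subgroup[OF lower_central_normal] lower_central_normal
        lower_central_Suc_subset[of 2, simplified] assms(2,6)] .
  have "\<delta> choose 2 = k' + (r choose 2) + t"
    using assms(7) unfolding \<delta>_def k'_def by linarith
  then have "real (\<Sum>i = 2..min \<delta> (k' + 1). \<delta> - i) + real (r choose 3) + real (t choose 2)
             \<le> real (\<delta> choose 3)"
    using sum_diff_plus_choose_three_le[OF _ assms(8)] by (metis of_nat_add of_nat_le_iff)
  moreover have "real k' * (real d - real \<delta>) \<le> real k * (real d - real \<delta>)"
    using \<open>k' \<le> k\<close> \<open>\<delta> \<le> d\<close> by (intro mult_right_mono) auto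
  ultimately show ?thesis
    using sum_diff_le_sum_diff_plus[OF \<open>\<delta> \<le> d\<close>, of k']
    unfolding Let_def d_def[symmetric] \<delta>_def[symmetric] k'_def[symmetric] by linarith
qed

end
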